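(* Let $F$ be a field, $U,V$ finite-dimensional $F$-vector spaces, $A:U\times U\to V$ an alternating bilinear map whose image spans $V$, $u_1<\dots<u_n$ an ordered basis of $U$, and $\mathcal{B}$, $\mathcal{W}(\mathcal{B})$, $f$, $W(\mathcal{B})$ as in the context. Then (i) the elements $f(\{a,b,c\})$, $\{a,b,c\}\in\mathcal{W}(\mathcal{B})$, are linearly independent in $V\otimes U$ (in particular they are pairwise distinct); and (ii) $f:\mathcal{W}(\mathcal{B})\to W(\mathcal{B})$ is a bijection.
   Context: $\mathcal{Y}$ is the set of $2$-element subsets of $\{1,\dots,n\}$, totally ordered by $\{i,j\}<\{r,s\}$ iff $\max\{i,j\}<\max\{r,s\}$, or the maxima are equal to $a$ and the remaining element of $\{i,j\}\setminus\{a\}$ is smaller than that of $\{r,s\}\setminus\{a\}$. $\mathcal{B}$ is constructed as follows: $\mathcal{B}_0=B_0=\emptyset$; inductively let $\{i,j\}$ ($i<j$) be the least element of $\mathcal{Y}$ with $A(u_i,u_j)\notin\operatorname{span}(B_k)$, and set $\mathcal{B}_{k+1}=\mathcal{B}_k\cup\{\{i,j\}\}$, $B_{k+1}=B_k\cup\{A(u_i,u_j)\}$; stop at $k=m=\dim V$ and put $\mathcal{B}=\mathcal{B}_m$. $\Psi:U\otimes_F U\otimes_F U\to V\otimes_F U$ is the linear map with $\Psi(x\otimes y\otimes z)=A(x,y)\otimes z+A(y,z)\otimes x+A(z,x)\otimes y$. $\mathcal{W}(\mathcal{B})$ is the set of $3$-element subsets of $\{1,\dots,n\}$ containing some $2$-element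 subset belonging to $\mathcal{B}$. For $\{a,b,c\}\in\mathcal{W}(\mathcal{B})$ with elements listed as $i<j<k$, $f(\{a,b,c\})=\Psi(u_i\otimes u_j\otimes u_k)$; $W(\mathcal{B})=f(\mathcal{W}(\mathcal{B}))$. *)

theory Defs
  imports Complex_Main
begin

text \<open>Vector spaces over a field 'f are modelled as types with a scalar
multiplication satisfying the library locale vector_space.
An alternating bilinear map A : U x U -> V.\<close>

definition alt_bilinear ::
  "('f::field \<Rightarrow> 'u::ab_group_add \<Rightarrow> 'u) \<Rightarrow> ('f \<Rightarrow> 'v::ab_group_add \<Rightarrow> 'v)
   \<Rightarrow> ('u \<Rightarrow> 'u \<Rightarrow> 'v) \<Rightarrow> bool" where
  "alt_bilinear sU sV A \<longleftrightarrow>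
     (\<forall>x. Vector_Spaces.linear sU sV (A x)) \<and> (\<forall>y. Vector_Spaces.linear sU sV (\<lambda>x. A x y)) \<and> (\<forall>x. A x x = 0)"

text \<open>tens is a tensor product map V x U -> T (T = V tensor U): it is bilinear,
its image spans T, and for linearly independent B in V and C in U the pure
tensors b (x) c, (b,c) in B x C, are pairwise distinct and linearly independent.
This determines T together with tens up to unique isomorphism.\<close>

definition is_tensor_product ::
  "('f::field \<Rightarrow> 'v::ab_group_add \<Rightarrow> 'v) \<Rightarrow> ('f \<Rightarrow> 'u::ab_group_add \<Rightarrow> 'u)
   \<Rightarrow> ('f \<Rightarrow> 't::ab_group_add \<Rightarrow> 't) \<Rightarrow> ('v \<Rightarrow> 'u \<Rightarrow> 't) \<Rightarrow> bool" where
  "is_tensor_product sV sU sT tens \<longleftrightarrow>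
     vector_space sT \<and>
     (\<forall>v. Vector_Spaces.linear sU sT (tens v)) \<and> (\<forall>x. Vector_Spaces.linear sV sT (\<lambda>v. tens v x)) \<and>
     module.span sT (range (\<lambda>(v, x). tens v x)) = UNIV \<and>
     (\<forall>B C. \<not> module.dependent sV B \<longrightarrow> \<not> module.dependent sU C \<longrightarrow>
        inj_on (\<lambda>(b, c). tens b c) (B \<times> C) \<and>
        \<not> module.dependent sT ((\<lambda>(b, c). tens b c) ` (B \<times> C)))"

definition Ylist :: "nat \<Rightarrow> (nat \<times> nat) list" where
  "Ylist n = concat (map (\<lambda>j. map (\<lambda>i. (i, j)) [1..<j]) [1..<Suc n])"

fun Bseq :: "('f::field \<Rightarrow> 'v::ab_group_add \<Rightarrow> 'v) \<Rightarrow> ('u \<Rightarrow> 'u \<Rightarrow> 'v)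
   \<Rightarrow> (nat \<Rightarrow> 'u) \<Rightarrow> nat \<Rightarrow> nat \<Rightarrow> nat set set" where
  "Bseq sV A u n 0 = {}"
| "Bseq sV A u n (Suc k) =
     (let Bk = Bseq sV A u n k;
          Vk = (\<lambda>P. A (u (Min P)) (u (Max P))) ` Bk;
          (i, j) = hd (filter (\<lambda>(i, j). A (u i) (u j) \<notin> module.span sV Vk) (Ylist n))
      in Bk \<union> {{i, j}})"

definition Bcal :: "('f::field \<Rightarrow> 'v::ab_group_add \<Rightarrow> 'v) \<Rightarrow> ('u \<Rightarrow> 'u \<Rightarrow> 'v)
   \<Rightarrow> (nat \<Rightarrow> 'u) \<Rightarrow> nat \<Rightarrow> nat set set" where
  "Bcal sV A u n = Bseq sV A u n (vector_space.dim sV (UNIV :: 'v set))"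

definition Wcal :: "nat \<Rightarrow> nat set set \<Rightarrow> nat set set" where
  "Wcal n \<B> = {S. S \<subseteq> {1..n} \<and> card S = 3 \<and> (\<exists>P\<in>\<B>. P \<subseteq> S)}"

definition Psi_pure :: "('v \<Rightarrow> 'u \<Rightarrow> 't::ab_group_add) \<Rightarrow> ('u \<Rightarrow> 'u \<Rightarrow> 'v)
   \<Rightarrow> 'u \<Rightarrow> 'u \<Rightarrow> 'u \<Rightarrow> 't" where
  "Psi_pure tens A x y z = tens (A x y) z + tens (A y z) x + tens (A z x) y"

definition fW :: "('v \<Rightarrow> 'u \<Rightarrow> 't::ab_group_add) \<Rightarrow> ('u \<Rightarrow> 'u \<Rightarrow> 'v)
   \<Rightarrow> (nat \<Rightarrow> 'u) \<Rightarrow> nat set \<Rightarrow> 't" where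
  "fW tens A u S = (let l = sorted_list_of_set S in
      Psi_pure tens A (u (l ! 0)) (u (l ! 1)) (u (l ! 2)))"

end

theory Submission
  imports Defs "HOL-Library.Nat_Bijection"
begin

(* Order 2-sets and 3-sets by set_encode; on 2-sets, set_encode {i, j} = 2^i + 2^j is the order
   of Y, and on 3-sets containing a fixed k it is monotone in the remaining pair.  Since the greedy
   construction always picks the least pair whose vector is not yet in the span, the vectors
   A(u_i, u_j), {i, j} in \<B>, form a basis of V in which each A(u_r, u_s) only involves basis
   vectors A(u_i, u_j) with {i, j} <= {r, s}.  In the basis b (x) u_k of V (x) U give each S in W(\<B>)
   the leading coordinate A(P) (x) u_k, where P in \<B> and S = P u {k}.  The coefficient of f(S)
   there is +-1, and f(S') has a nonzero coefficient there only if S' = Q u {k} with P <= Q, hence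
   S <= S'.  So the family f(S) is triangular with respect to a total order: it is linearly
   independent and f is injective. *)

lemma bilinear_span_image_eq_UNIV:
  assumes lin_right: "\<And>x. Vector_Spaces.linear s2 s3 (g x)"
    and lin_left: "\<And>y. Vector_Spaces.linear s1 s3 (\<lambda>x. g x y)"
    and X: "module.span s1 X = UNIV" and Y: "module.span s2 Y = UNIV"
    and g: "module.span s3 (range (\<lambda>(x, y). g x y)) = UNIV"
  shows "module.span s3 ((\<lambda>(x, y). g x y) ` (X \<times> Y)) = UNIV"
proof -
  let ?Z = "(\<lambda>(x, y). g x y) ` (X \<times> Y)"
  interpret s3: vector_space s3
    using lin_right by (simp add: Vector_Spaces.linear_def)
  have basic: "g x y \<in> s3.span ?Z" if "x \<in> X" for x y
  proof -
    have "g x y \<in> g x ` module.span s2 Y" using Y by simp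
    also have "\<dots> = s3.span (g x ` Y)"
      using module_hom.span_image[OF lin_right[unfolded linear_iff_module_hom]] by simp
    also have "\<dots> \<subseteq> s3.span ?Z" by (rule s3.span_mono) (use that in auto)
    finally show ?thesis .
  qed
  have "g x y \<in> s3.span ?Z" for x y
  proof -
    have "g x y \<in> (\<lambda>x. g x y) ` module.span s1 X" using X by simp
    also have "\<dots> = s3.span ((\<lambda>x. g x y) ` X)"
      using module_hom.span_image[OF lin_left[unfolded linear_iff_module_hom]] by simp
    also have "\<dots> \<subseteq> s3.span ?Z"
      using basic by (intro s3.span_minimal) auto
    finally show ?thesis .
  qed
  then have "s3.span (range (\<lambda>(x, y). g x y)) \<subseteq> s3.span ?Z"
    by (intro s3.span_minimal) auto
  then show ?thesis using g by auto
qed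

lemma (in vector_space) independent_image_if_triangular:
  fixes f lead :: "'i \<Rightarrow> 'b" and rank :: "'i \<Rightarrow> 'r::linorder"
  assumes E: "independent E" "span E = UNIV" and W: "finite W"
    and diagonal: "\<And>S. S \<in> W \<Longrightarrow> representation E (f S) (lead S) \<noteq> 0"
    and triangular: "\<And>S S'. S \<in> W \<Longrightarrow> S' \<in> W \<Longrightarrow> representation E (f S') (lead S) \<noteq> 0
                       \<Longrightarrow> S' = S \<or> rank S < rank S'"
  shows "independent (f ` W) \<and> inj_on f W"
proof -
  have "independent (f ` W') \<and> inj_on f W'" if "W' \<subseteq> W" for W'
    using finite_subset[OF that W] that
  proof (induction W' rule: finite_ranking_induct[where f = rank])
    case empty
    then show ?case by (simp add: independent_empty)
  next
    case (insert S W')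
    then have IH: "independent (f ` W') \<and> inj_on f W'" and S: "S \<in> W" by auto
    show ?case
    proof (cases "S \<in> W'")
      case True
      then show ?thesis using IH by (simp add: insert_absorb)
    next
      case False
      interpret coord: Vector_Spaces.linear scale "(*)" "\<lambda>v. representation E v (lead S)"
        by (rule linear_representation[OF E])
      have "representation E (f S') (lead S) = 0" if "S' \<in> W'" for S'
        using triangular[OF S, of S'] insert.hyps(2)[OF that] insert.prems that False by force
      then have "representation E y (lead S) = 0" if "y \<in> span (f ` W')" for y
        using coord.eq_0_on_span[OF _ that] by blast
      then have "f S \<notin> span (f ` W')" using diagonal[OF S] by blast
      then show ?thesis using IH False by (auto simp: independent_insertI intro: span_base)
    qed
  qed
  then show ?thesis by blast
qed

lemma tensor_product_basis:
  assumes T: "is_tensor_product sV sU sT tens"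
    and B: "\<not> module.dependent sV B" "module.span sV B = UNIV"
    and C: "\<not> module.dependent sU C" "module.span sU C = UNIV"
  shows "\<not> module.dependent sT ((\<lambda>(b, c). tens b c) ` (B \<times> C))"
    and "module.span sT ((\<lambda>(b, c). tens b c) ` (B \<times> C)) = UNIV"
    and "inj_on (\<lambda>(b, c). tens b c) (B \<times> C)"
  using T B C bilinear_span_image_eq_UNIV[of sU sT tens sV B C]
  unfolding is_tensor_product_def by auto

lemma tensor_product_representation:
  assumes T: "is_tensor_product sV sU sT tens"
    and B: "\<not> module.dependent sV B" "module.span sV B = UNIV"
    and C: "\<not> module.dependent sU C" "module.span sU C = UNIV"
    and b: "b \<in> B" and c: "c \<in> C" "c' \<in> C"
  shows "module.representation sT ((\<lambda>(b, c). tens b c) ` (B \<times> C)) (tens v c') (tens b c)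
       = (if c' = c then module.representation sV B v b else 0)"
proof -
  let ?E = "(\<lambda>(b, c). tens b c) ` (B \<times> C)"
  note E = tensor_product_basis[OF T B C]
  have lin_tens: "Vector_Spaces.linear sV sT (\<lambda>v. tens v c')"
    using T by (simp add: is_tensor_product_def)
  interpret vV: vector_space sV using lin_tens by (simp add: Vector_Spaces.linear_def)
  interpret vT: vector_space sT using lin_tens by (simp add: Vector_Spaces.linear_def)
  have lin_lhs: "Vector_Spaces.linear sV (*) (\<lambda>v. vT.representation ?E (tens v c') (tens b c))"
    using Vector_Spaces.linear_compose[OF lin_tens vT.linear_representation[OF E(1,2)]]
    by (simp add: o_def)
  interpret VF: vector_space_pair sV "(*) :: 'a \<Rightarrow> 'a \<Rightarrow> 'a"
    using lin_lhs by (simp add: Vector_Spaces.linear_def vector_space_pair_def)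
  have lin_rhs: "Vector_Spaces.linear sV (*) (\<lambda>v. if c' = c then vV.representation B v b else 0)"
    using vV.linear_representation[OF B] VF.linear_zero by (cases "c' = c") simp_all
  have "vT.representation ?E (tens b' c') (tens b c) = (if c' = c then vV.representation B b' b else 0)"
    if b': "b' \<in> B" for b'
  proof -
    have "tens b c = tens b' c' \<longleftrightarrow> b = b' \<and> c = c'"
      using inj_onD[OF E(3), of "(b, c)" "(b', c')"] b b' c by auto
    moreover have "tens b' c' \<in> ?E" using b' c by force
    ultimately show ?thesis
      by (auto simp: vT.representation_basis[OF E(1)] vV.representation_basis[OF B(1) b'])
  qed
  then show ?thesis
    by (rule VF.linear_eq_on_span[OF lin_lhs lin_rhs]) (auto simp: B(2))
qed

lemma hd_filter_le:
  fixes r :: "'a \<Rightarrow> 'b::linorder"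
  assumes "sorted (map r xs)" "x \<in> set xs" "P x"
  shows "r (hd (filter P xs)) \<le> r x"
  using assms by (induction xs) auto

lemma set_Ylist: "set (Ylist n) = {(i, j). 1 \<le> i \<and> i < j \<and> j \<le> n}"
  by (auto simp: Ylist_def image_iff intro!: bexI[of _ "snd _"])

lemma sorted_Ylist: "sorted (map (\<lambda>(i, j). set_encode {i, j}) (Ylist n))"
proof (induction n)
  case 0
  then show ?case by (simp add: Ylist_def)
next
  case (Suc n)
  have new: "sorted (map (\<lambda>i. set_encode {i, Suc n}) [1..<Suc n])"
    unfolding sorted_map by (rule sorted_wrt_mono_rel[OF _ sorted_wrt_upt]) auto
  have old_le_new: "set_encode {i, j} \<le> set_encode {i', Suc n}"
    if "(i, j) \<in> set (Ylist n)" "i' < Suc n" for i j i'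
  proof -
    have "i < j" "j \<le> n" using that(1) by (auto simp: set_Ylist)
    then have "(2::nat) ^ i < 2 ^ j" "(2::nat) ^ j \<le> 2 ^ n" by simp_all
    moreover have "set_encode {i, j} = 2 ^ i + 2 ^ j" "set_encode {i', Suc n} = 2 ^ i' + 2 ^ Suc n"
      using \<open>i < j\<close> \<open>j \<le> n\<close> that(2) by simp_all
    ultimately show ?thesis unfolding power_Suc by linarith
  qed
  have "Ylist (Suc n) = Ylist n @ map (\<lambda>i. (i, Suc n)) [1..<Suc n]"
    by (simp add: Ylist_def)
  then show ?case
    using Suc new old_le_new by (auto simp: sorted_append o_def simp del: upt_Suc)
qed

lemma set_encode_insert_le:
  assumes "finite P" "finite Q" "k \<notin> P" "k \<notin> Q" "set_encode P \<le> set_encode Q"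
  shows "insert k P = insert k Q \<or> set_encode (insert k P) < set_encode (insert k Q)"
  using assms set_encode_eq[of P Q] by (cases "P = Q") auto

lemma sorted_list_of_set_card_3:
  fixes S :: "'a::linorder set"
  assumes "card S = 3"
  obtains a b c where "sorted_list_of_set S = [a, b, c]" "a < b" "b < c" "S = {a, b, c}"
proof -
  have "\<exists>a b c. xs = [a, b, c]" if "length xs = 3" for xs :: "'a list"
    using that by (auto simp: numeral_3_eq_3 length_Suc_conv)
  then obtain a b c where l: "sorted_list_of_set S = [a, b, c]"
    using assms by (metis length_sorted_list_of_set)
  have "sorted_wrt (<) [a, b, c]" using strict_sorted_list_of_set[of S] l by simp
  moreover have "S = {a, b, c}"
    using set_sorted_list_of_set[of S] l assms card.infinite by fastforce
  ultimately show ?thesis using that l by simp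
qed

locale alternating_map_on_basis =
  fixes sU :: "'f::field \<Rightarrow> 'u::ab_group_add \<Rightarrow> 'u"
    and sV :: "'f \<Rightarrow> 'v::ab_group_add \<Rightarrow> 'v"
    and A :: "'u \<Rightarrow> 'u \<Rightarrow> 'v"
    and u :: "nat \<Rightarrow> 'u"
    and n :: nat
  assumes A_alt: "alt_bilinear sU sV A"
    and basis_span: "module.span sU (u ` {1..n}) = UNIV"
    and A_span: "module.span sV (range (\<lambda>(x, y). A x y)) = UNIV"
begin

lemma linear_A_right: "Vector_Spaces.linear sU sV (A x)"
  and linear_A_left: "Vector_Spaces.linear sU sV (\<lambda>x. A x y)"
  using A_alt by (simp_all add: alt_bilinear_def)

sublocale vV: vector_space sV
  using linear_A_right by (simp add: Vector_Spaces.linear_def)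

lemma A_self: "A x x = 0"
  using A_alt by (simp add: alt_bilinear_def)

lemma A_add_right: "A x (y + z) = A x y + A x z"
  using linear_A_right[of x] by (simp add: Vector_Spaces.linear_iff)

lemma A_add_left: "A (x + y) z = A x z + A y z"
  using linear_A_left[of z] by (simp add: Vector_Spaces.linear_iff)

lemma A_swap: "A y x = - A x y"
proof -
  have "A (x + y) (x + y) = A x (x + y) + A y (x + y)" by (rule A_add_left)
  also have "\<dots> = A x y + A y x" by (simp add: A_add_right A_self)
  finally have "A x y + A y x = 0" by (simp add: A_self)
  then show ?thesis by (metis neg_eq_iff_add_eq_0)
qed

definition pair_vec :: "nat set \<Rightarrow> 'v" where
  "pair_vec P = A (u (Min P)) (u (Max P))"

definition pairs :: "nat set set" where
  "pairs = {P. P \<subseteq> {1..n} \<and> card P = 2}"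

lemma pairs_iff: "Q \<in> pairs \<longleftrightarrow> (\<exists>i j. Q = {i, j} \<and> 1 \<le> i \<and> i < j \<and> j \<le> n)"
proof
  assume "Q \<in> pairs"
  then obtain i j where "Q = {i, j}" "i \<noteq> j" "Q \<subseteq> {1..n}" by (auto simp: pairs_def card_2_iff)
  then show "\<exists>i j. Q = {i, j} \<and> 1 \<le> i \<and> i < j \<and> j \<le> n"
    by (metis atLeastAtMost_iff insert_commute insert_subset linorder_neqE_nat)
qed (auto simp: pairs_def)

lemma pair_vec_pair: "i < j \<Longrightarrow> pair_vec {i, j} = A (u i) (u j)"
  by (simp add: pair_vec_def)

lemma finite_pairs: "finite pairs"
  by (rule finite_subset[of _ "Pow {1..n}"]) (auto simp: pairs_def)

lemma span_pair_vec_pairs: "vV.span (pair_vec ` pairs) = UNIV"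
proof -
  have "A (u i) (u j) \<in> vV.span (pair_vec ` pairs)" if "i \<in> {1..n}" "j \<in> {1..n}" for i j
  proof -
    consider "i = j" | "i < j" | "j < i" by linarith
    then show ?thesis
    proof cases
      case 1
      then show ?thesis by (simp add: A_self vV.span_zero)
    next
      case 2
      then have "{i, j} \<in> pairs" using that by (simp add: pairs_def)
      then show ?thesis using 2 by (metis pair_vec_pair imageI vV.span_base)
    next
      case 3
      then have "{j, i} \<in> pairs" using that by (simp add: pairs_def)
      then show ?thesis using 3 by (metis A_swap pair_vec_pair imageI vV.span_base vV.span_neg)
    qed
  qed
  then have "vV.span ((\<lambda>(x, y). A x y) ` (u ` {1..n} \<times> u ` {1..n})) \<subseteq> vV.span (pair_vec ` pairs)"
    by (intro vV.span_minimal) auto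
  then show ?thesis
    using bilinear_span_image_eq_UNIV[OF linear_A_right linear_A_left basis_span basis_span A_span]
    by auto
qed

lemma card_independent_le_dim:
  assumes "vV.independent X"
  shows "finite X \<and> card X \<le> vV.dim UNIV"
proof -
  obtain B where B: "vV.independent B" "UNIV \<subseteq> vV.span B" "card B = vV.dim UNIV"
    using vV.basis_exists[of UNIV] by blast
  have "finite B"
    using vV.independent_span_bound[OF finite_imageI[OF finite_pairs, of pair_vec] B(1)]
      span_pair_vec_pairs
    by simp
  then show ?thesis using vV.independent_span_bound[OF _ assms, of B] B by auto
qed

abbreviation greedy :: "nat \<Rightarrow> nat set set" where
  "greedy k \<equiv> Bseq sV A u n k"

abbreviation greedy_span :: "nat \<Rightarrow> 'v set" where
  "greedy_span k \<equiv> vV.span (pair_vec ` greedy k)"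

lemma greedy_Suc:
  "greedy (Suc k) = insert {fst (hd (filter (\<lambda>(i, j). A (u i) (u j) \<notin> greedy_span k) (Ylist n))),
                            snd (hd (filter (\<lambda>(i, j). A (u i) (u j) \<notin> greedy_span k) (Ylist n)))}
                           (greedy k)"
  by (simp add: Let_def split_def pair_vec_def[abs_def])

lemma greedy_subset_Suc: "greedy k \<subseteq> greedy (Suc k)"
  unfolding greedy_Suc by blast

lemma greedy_span_subset_Suc: "greedy_span k \<subseteq> greedy_span (Suc k)"
  by (intro vV.span_mono image_mono greedy_subset_Suc)

lemma greedy_step:
  assumes "greedy_span k \<noteq> UNIV"
  obtains P where "P \<in> pairs" "pair_vec P \<notin> greedy_span k" "greedy (Suc k) = insert P (greedy k)"
    "\<And>Q. Q \<in> pairs \<Longrightarrow> pair_vec Q \<notin> greedy_span k \<Longrightarrow> set_encode P \<le> set_encode Q"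
proof -
  let ?p = "\<lambda>(i, j). A (u i) (u j) \<notin> greedy_span k"
  have in_Ylist: "\<exists>a b. Q = {a, b} \<and> (a, b) \<in> set (Ylist n) \<and> ?p (a, b)"
    if Q: "Q \<in> pairs" "pair_vec Q \<notin> greedy_span k" for Q
  proof -
    obtain a b where "Q = {a, b}" "1 \<le> a" "a < b" "b \<le> n" using Q(1) unfolding pairs_iff by blast
    then show ?thesis
      using Q(2) by (intro exI[of _ a] exI[of _ b]) (simp add: set_Ylist pair_vec_pair)
  qed
  have "\<not> pair_vec ` pairs \<subseteq> greedy_span k"
    using assms span_pair_vec_pairs vV.span_minimal[of "pair_vec ` pairs" "greedy_span k"] by auto
  then obtain Q where "Q \<in> pairs" "pair_vec Q \<notin> greedy_span k" by blast
  then obtain a b where "(a, b) \<in> set (Ylist n)" "?p (a, b)" using in_Ylist by blast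
  then have "filter ?p (Ylist n) \<noteq> []" by (auto simp: filter_empty_conv)
  then have "hd (filter ?p (Ylist n)) \<in> set (filter ?p (Ylist n))" by (rule hd_in_set)
  moreover obtain i j where ij: "hd (filter ?p (Ylist n)) = (i, j)" by fastforce
  ultimately have "(i, j) \<in> set (Ylist n)" and new: "?p (i, j)" by simp_all
  then have "1 \<le> i" "i < j" "j \<le> n" by (simp_all add: set_Ylist)
  show ?thesis
  proof
    show "{i, j} \<in> pairs" unfolding pairs_iff using \<open>1 \<le> i\<close> \<open>i < j\<close> \<open>j \<le> n\<close> by blast
    show "pair_vec {i, j} \<notin> greedy_span k" using new \<open>i < j\<close> by (simp add: pair_vec_pair)
    show "greedy (Suc k) = insert {i, j} (greedy k)" using greedy_Suc[of k] ij by simp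
  next
    fix Q assume "Q \<in> pairs" "pair_vec Q \<notin> greedy_span k"
    then obtain a b where "Q = {a, b}" "(a, b) \<in> set (Ylist n)" "?p (a, b)" using in_Ylist by blast
    then show "set_encode {i, j} \<le> set_encode Q"
      using hd_filter_le[OF sorted_Ylist[of n], where x = "(a, b)" and P = ?p] ij by simp
  qed
qed

lemma greedy_le_outside:
  assumes "Q \<in> pairs" "pair_vec Q \<notin> greedy_span k" "P \<in> greedy k"
  shows "set_encode P \<le> set_encode Q"
  using assms(2,3)
proof (induction k arbitrary: P)
  case 0
  then show ?case by simp
next
  case (Suc k)
  have outside: "pair_vec Q \<notin> greedy_span k" using Suc.prems(1) greedy_span_subset_Suc by blast
  then have "greedy_span k \<noteq> UNIV" by blast
  then obtain P' where "greedy (Suc k) = insert P' (greedy k)"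
    and "\<And>Q. Q \<in> pairs \<Longrightarrow> pair_vec Q \<notin> greedy_span k \<Longrightarrow> set_encode P' \<le> set_encode Q"
    by (rule greedy_step) blast
  then show ?case using Suc assms(1) outside by auto
qed

lemma greedy_span_le:
  assumes "Q \<in> pairs" "pair_vec Q \<in> greedy_span k"
  shows "pair_vec Q \<in> vV.span (pair_vec ` {P \<in> greedy k. set_encode P \<le> set_encode Q})"
  using assms(2)
proof (induction k)
  case 0
  then show ?case by simp
next
  case (Suc k)
  show ?case
  proof (cases "pair_vec Q \<in> greedy_span k")
    case True
    have "vV.span (pair_vec ` {P \<in> greedy k. set_encode P \<le> set_encode Q})
        \<subseteq> vV.span (pair_vec ` {P \<in> greedy (Suc k). set_encode P \<le> set_encode Q})"
      using greedy_subset_Suc by (intro vV.span_mono image_mono) blast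
    then show ?thesis using Suc.IH True by blast
  next
    case False
    then have "greedy_span k \<noteq> UNIV" by blast
    then obtain P' where "greedy (Suc k) = insert P' (greedy k)"
      and "\<And>Q. Q \<in> pairs \<Longrightarrow> pair_vec Q \<notin> greedy_span k \<Longrightarrow> set_encode P' \<le> set_encode Q"
      by (rule greedy_step) blast
    then have "{P \<in> greedy (Suc k). set_encode P \<le> set_encode Q} = greedy (Suc k)"
      using greedy_le_outside[OF assms(1) False] assms(1) False by auto
    then show ?thesis using Suc.prems by simp
  qed
qed

lemma greedy_independent:
  "k \<le> vV.dim UNIV \<Longrightarrow> greedy k \<subseteq> pairs \<and> card (greedy k) = k \<and> inj_on pair_vec (greedy k)
     \<and> vV.independent (pair_vec ` greedy k)"
proof (induction k)
  case 0
  then show ?case by (simp add: vV.independent_empty)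
next
  case (Suc k)
  then have IH: "greedy k \<subseteq> pairs" "card (greedy k) = k" "inj_on pair_vec (greedy k)"
      "vV.independent (pair_vec ` greedy k)" and "k < vV.dim UNIV" by auto
  have fin: "finite (greedy k)" using IH(1) finite_pairs finite_subset by blast
  have "card (pair_vec ` greedy k) < vV.dim UNIV"
    using IH(2,3) \<open>k < vV.dim UNIV\<close> by (simp add: card_image)
  then have "greedy_span k \<noteq> UNIV"
    using vV.dim_le_card[of UNIV "pair_vec ` greedy k"] fin by auto
  then obtain P where P: "P \<in> pairs" "pair_vec P \<notin> greedy_span k"
    and step: "greedy (Suc k) = insert P (greedy k)"
    by (rule greedy_step)
  have "pair_vec P \<notin> pair_vec ` greedy k" using P(2) vV.span_base by blast
  moreover have "P \<notin> greedy k" using calculation by blast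
  ultimately show ?case
    unfolding step using IH fin P by (auto simp: vV.independent_insertI)
qed

abbreviation \<B> :: "nat set set" where
  "\<B> \<equiv> Bcal sV A u n"

lemma pair_basis:
  shows "\<B> \<subseteq> pairs" and "inj_on pair_vec \<B>" and "vV.independent (pair_vec ` \<B>)"
    and "vV.span (pair_vec ` \<B>) = UNIV"
proof -
  have B: "\<B> \<subseteq> pairs" "card \<B> = vV.dim UNIV" "inj_on pair_vec \<B>" "vV.independent (pair_vec ` \<B>)"
    using greedy_independent[of "vV.dim UNIV"] by (simp_all add: Bcal_def)
  then show "\<B> \<subseteq> pairs" "inj_on pair_vec \<B>" "vV.independent (pair_vec ` \<B>)" by simp_all
  have fin: "finite (pair_vec ` \<B>)" using B(1) finite_pairs finite_subset by blast
  have "pair_vec Q \<in> vV.span (pair_vec ` \<B>)" if "Q \<in> pairs" for Q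
  proof (rule ccontr)
    assume outside: "pair_vec Q \<notin> vV.span (pair_vec ` \<B>)"
    then have "card (insert (pair_vec Q) (pair_vec ` \<B>)) \<le> vV.dim UNIV"
      using card_independent_le_dim vV.independent_insertI B(4) by blast
    moreover have "pair_vec Q \<notin> pair_vec ` \<B>" using outside vV.span_base by blast
    ultimately show False using fin B(2,3) by (simp add: card_image)
  qed
  then have "vV.span (pair_vec ` pairs) \<subseteq> vV.span (pair_vec ` \<B>)"
    by (intro vV.span_minimal) auto
  then show "vV.span (pair_vec ` \<B>) = UNIV" using span_pair_vec_pairs by auto
qed

lemma representation_pair_vec_ne_zero:
  assumes Q: "Q \<in> pairs" and P: "P \<in> \<B>"
    and ne: "vV.representation (pair_vec ` \<B>) (pair_vec Q) (pair_vec P) \<noteq> 0"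
  shows "set_encode P \<le> set_encode Q"
proof -
  let ?below = "pair_vec ` {P \<in> \<B>. set_encode P \<le> set_encode Q}"
  have "pair_vec Q \<in> vV.span ?below"
    using greedy_span_le[OF Q] pair_basis(4) by (simp add: Bcal_def)
  then have "vV.representation (pair_vec ` \<B>) (pair_vec Q) = vV.representation ?below (pair_vec Q)"
    by (intro vV.representation_extend pair_basis(3)) auto
  then have "vV.representation ?below (pair_vec Q) (pair_vec P) \<noteq> 0" using ne by simp
  then have "pair_vec P \<in> ?below" by (rule vV.representation_ne_zero)
  then obtain P' where "P' \<in> \<B>" "set_encode P' \<le> set_encode Q" "pair_vec P = pair_vec P'" by auto
  then show ?thesis using inj_onD[OF pair_basis(2) _ P] by metis
qed

end

locale alternating_map_tensor = alternating_map_on_basis sU sV A u n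
  for sU :: "'f::field \<Rightarrow> 'u::ab_group_add \<Rightarrow> 'u"
    and sV :: "'f \<Rightarrow> 'v::ab_group_add \<Rightarrow> 'v"
    and A :: "'u \<Rightarrow> 'u \<Rightarrow> 'v"
    and u :: "nat \<Rightarrow> 'u"
    and n :: nat +
  fixes sT :: "'f \<Rightarrow> 't::ab_group_add \<Rightarrow> 't"
    and tens :: "'v \<Rightarrow> 'u \<Rightarrow> 't"
  assumes basis_inj: "inj_on u {1..n}"
    and basis_indep: "\<not> module.dependent sU (u ` {1..n})"
    and T: "is_tensor_product sV sU sT tens"
begin

sublocale vT: vector_space sT
  using T by (simp add: is_tensor_product_def)

definition tensor_basis :: "'t set" where
  "tensor_basis = (\<lambda>(b, c). tens b c) ` (pair_vec ` \<B> \<times> u ` {1..n})"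

lemma independent_tensor_basis: "vT.independent tensor_basis"
  and span_tensor_basis: "vT.span tensor_basis = UNIV"
  using tensor_product_basis[OF T pair_basis(3,4) basis_indep basis_span]
  by (simp_all add: tensor_basis_def)

abbreviation coord_V :: "'v \<Rightarrow> nat set \<Rightarrow> 'f" where
  "coord_V v P \<equiv> vV.representation (pair_vec ` \<B>) v (pair_vec P)"

abbreviation coord_T :: "'t \<Rightarrow> nat set \<Rightarrow> nat \<Rightarrow> 'f" where
  "coord_T t P k \<equiv> vT.representation tensor_basis t (tens (pair_vec P) (u k))"

lemma coord_T_tens:
  assumes "P \<in> \<B>" "k \<in> {1..n}" "z \<in> {1..n}"
  shows "coord_T (tens v (u z)) P k = (if z = k then coord_V v P else 0)"
  using tensor_product_representation[OF T pair_basis(3,4) basis_indep basis_span,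
      of "pair_vec P" "u k" "u z" v] assms inj_onD[OF basis_inj, of z k]
  unfolding tensor_basis_def by auto

lemma coord_T_fW:
  assumes S: "S \<subseteq> {1..n}" "card S = 3" and P: "P \<in> \<B>" and k: "k \<in> {1..n}"
  shows "coord_T (fW tens A u S) P k \<noteq> 0 \<longleftrightarrow> k \<in> S \<and> coord_V (pair_vec (S - {k})) P \<noteq> 0"
proof -
  obtain a b c where l: "sorted_list_of_set S = [a, b, c]" and abc: "a < b" "b < c" "S = {a, b, c}"
    by (rule sorted_list_of_set_card_3[OF S(2)])
  have "a \<in> {1..n}" "b \<in> {1..n}" "c \<in> {1..n}" using S(1) abc(3) by auto
  then have expand: "coord_T (fW tens A u S) P k =
      (if c = k then coord_V (A (u a) (u b)) P else 0) + (if a = k then coord_V (A (u b) (u c)) P else 0)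
      + (if b = k then coord_V (A (u c) (u a)) P else 0)"
    by (simp add: fW_def Psi_pure_def l vT.representation_add[OF independent_tensor_basis] span_tensor_basis
        coord_T_tens[OF P k])
  consider "k = a" | "k = b" | "k = c" | "k \<notin> S" using abc(3) by auto
  then show ?thesis
  proof cases
    case 1
    then have "S - {k} = {b, c}" "k \<in> S" using abc by auto
    then show ?thesis using expand 1 abc(1,2) by (simp add: pair_vec_pair)
  next
    case 2
    then have "S - {k} = {a, c}" "k \<in> S" using abc by auto
    moreover have "coord_V (A (u c) (u a)) P = - coord_V (pair_vec {a, c}) P"
      using abc(1,2) A_swap[of "u c" "u a"]
      by (simp add: pair_vec_pair vV.representation_neg[OF pair_basis(3)] pair_basis(4))
    ultimately show ?thesis using expand 2 abc(1,2) by simp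
  next
    case 3
    then have "S - {k} = {a, b}" "k \<in> S" using abc by auto
    then show ?thesis using expand 3 abc(1,2) by (simp add: pair_vec_pair)
  next
    case 4
    then show ?thesis using expand abc(3) by auto
  qed
qed

definition lead_pair :: "nat set \<Rightarrow> nat set" where
  "lead_pair S = (SOME P. P \<in> \<B> \<and> P \<subseteq> S)"

definition lead_index :: "nat set \<Rightarrow> nat" where
  "lead_index S = the_elem (S - lead_pair S)"

lemma lead_pair_index:
  assumes "S \<in> Wcal n \<B>"
  shows "lead_pair S \<in> \<B>" "lead_index S \<in> {1..n}" "lead_index S \<notin> lead_pair S"
    "S = insert (lead_index S) (lead_pair S)"
proof -
  have S: "S \<subseteq> {1..n}" "card S = 3" "\<exists>P. P \<in> \<B> \<and> P \<subseteq> S"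
    using assms by (auto simp: Wcal_def)
  have P: "lead_pair S \<in> \<B>" "lead_pair S \<subseteq> S"
    unfolding lead_pair_def using someI_ex[OF S(3)] by simp_all
  then have "card (lead_pair S) = 2" using pair_basis(1) by (auto simp: pairs_def)
  then have "card (S - lead_pair S) = 1"
    using P(2) S(1,2) by (simp add: card_Diff_subset finite_subset)
  then obtain k where k: "S - lead_pair S = {k}" by (rule card_1_singletonE)
  then have "lead_index S = k" by (simp add: lead_index_def)
  then show "lead_pair S \<in> \<B>" "lead_index S \<in> {1..n}" "lead_index S \<notin> lead_pair S"
    "S = insert (lead_index S) (lead_pair S)"
    using P S(1) k by auto
qed

lemma coord_T_fW_lead_self:
  assumes "S \<in> Wcal n \<B>"
  shows "coord_T (fW tens A u S) (lead_pair S) (lead_index S) \<noteq> 0"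
proof -
  note lead = lead_pair_index[OF assms]
  have "S - {lead_index S} = lead_pair S" using lead(3,4) by blast
  then show ?thesis
    using assms lead(1-4) coord_T_fW[of S "lead_pair S" "lead_index S"]
    by (auto simp: Wcal_def vV.representation_basis[OF pair_basis(3)])
qed

lemma coord_T_fW_lead:
  assumes S: "S \<in> Wcal n \<B>" and S': "S' \<in> Wcal n \<B>"
    and ne: "coord_T (fW tens A u S') (lead_pair S) (lead_index S) \<noteq> 0"
  shows "S' = S \<or> set_encode S < set_encode S'"
proof -
  let ?P = "lead_pair S" and ?k = "lead_index S"
  let ?Q = "S' - {?k}"
  note lead = lead_pair_index[OF S]
  have S'3: "S' \<subseteq> {1..n}" "card S' = 3" using S' by (simp_all add: Wcal_def)
  have k: "?k \<in> S'" and coord: "coord_V (pair_vec ?Q) ?P \<noteq> 0"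
    using coord_T_fW[OF S'3 lead(1,2)] ne by simp_all
  have fin: "finite S'" using S'3(1) finite_subset by blast
  have Q: "?Q \<in> pairs" using S'3 k fin by (auto simp: pairs_def)
  have "set_encode ?P \<le> set_encode ?Q"
    by (rule representation_pair_vec_ne_zero[OF Q lead(1) coord])
  moreover have "finite ?P"
    using lead(1) pair_basis(1) by (simp add: pairs_def card_ge_0_finite subset_iff)
  ultimately have "insert ?k ?P = insert ?k ?Q \<or> set_encode (insert ?k ?P) < set_encode (insert ?k ?Q)"
    using set_encode_insert_le[of ?P ?Q ?k] lead(3) fin by simp
  moreover have "insert ?k ?Q = S'" using k by blast
  ultimately show ?thesis using lead(4) by metis
qed

lemma finite_Wcal: "finite (Wcal n \<B>)"
  by (rule finite_subset[of _ "Pow {1..n}"]) (auto simp: Wcal_def)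

theorem independent_fW_image:
  "vT.independent (fW tens A u ` Wcal n \<B>) \<and> inj_on (fW tens A u) (Wcal n \<B>)"
proof (rule vT.independent_image_if_triangular[OF independent_tensor_basis span_tensor_basis finite_Wcal])
  fix S assume "S \<in> Wcal n \<B>"
  then show "coord_T (fW tens A u S) (lead_pair S) (lead_index S) \<noteq> 0"
    by (rule coord_T_fW_lead_self)
next
  fix S S' assume "S \<in> Wcal n \<B>" "S' \<in> Wcal n \<B>"
    "coord_T (fW tens A u S') (lead_pair S) (lead_index S) \<noteq> 0"
  then show "S' = S \<or> set_encode S < set_encode S'"
    by (rule coord_T_fW_lead)
qed

end

theorem proposition2p7:
  fixes sU :: "'f::field \<Rightarrow> 'u::ab_group_add \<Rightarrow> 'u"
    and sV :: "'f \<Rightarrow> 'v::ab_group_add \<Rightarrow> 'v"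
    and sT :: "'f \<Rightarrow> 't::ab_group_add \<Rightarrow> 't"
    and tens :: "'v \<Rightarrow> 'u \<Rightarrow> 't"
    and A :: "'u \<Rightarrow> 'u \<Rightarrow> 'v"
    and u :: "nat \<Rightarrow> 'u"
    and n :: nat
  assumes U: "vector_space sU"
    and V: "vector_space sV"
    and Vfin: "\<exists>S. finite S \<and> module.span sV S = UNIV"
    and basis_inj: "inj_on u {1..n}"
    and basis_indep: "\<not> module.dependent sU (u ` {1..n})"
    and basis_span: "module.span sU (u ` {1..n}) = UNIV"
    and A_alt: "alt_bilinear sU sV A"
    and A_span: "module.span sV (range (\<lambda>(x, y). A x y)) = UNIV"
    and T: "is_tensor_product sV sU sT tens"
  shows "\<not> module.dependent sT (fW tens A u ` Wcal n (Bcal sV A u n))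
         \<and> inj_on (fW tens A u) (Wcal n (Bcal sV A u n))
         \<and> bij_betw (fW tens A u) (Wcal n (Bcal sV A u n))
                                  (fW tens A u ` Wcal n (Bcal sV A u n))"
proof -
  interpret alternating_map_tensor sU sV A u n sT tens
    by unfold_locales (fact A_alt basis_span A_span basis_inj basis_indep T)+
  show ?thesis
    using independent_fW_image by (simp add: inj_on_imp_bij_betw)
qed

end
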